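(* Let $G$ be an ordered graph, and let $e,f\in E(G)$ be edges which both contain the vertex $\mathrm{v}_G(f)$ and satisfy $\mathrm{ht}_G(f)\prec_{\mathrm{lex}}\mathrm{ht}_G(e)$. Then $e<_G f$.
   Context: An ordered graph is a finite simple graph $G$ equipped with a total order $\le_G$ on $E(G)$ and a total order $\le^V_G$ on $V(G)$. Let $\mathbb N=\{1,2,\dots\}$. Define $\preceq_{\mathrm{lex}}$ on $\mathbb N\times V(G)$ by $(i,v)\preceq_{\mathrm{lex}}(i',v')$ iff $i<i'$, or $i=i'$ and $v\le^V_G v'$. The height table $\mathrm{HT}(G)$ is a partially filled array indexed by $\mathbb N\times V(G)$, built by going through all $(i,v)$ in $\preceq_{\mathrm{lex}}$-increasing order and setting the entry at $(i,v)$ to be the $\le_G$-largest edge containing $v$ not yet entered into the table (blank if none remain). Every edge is entered exactly once; $\mathrm{ht}_G(e)=(\mathrm{h}_G(e),\mathrm{v}_G(e))$ is the position of $e$, with $\mathrm{h}_G(e)$ its row and $\mathrm{v}_G(e)$ its column. *)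

theory Defs
  imports Main
begin

text \<open>An ordered graph: finite vertex set V, edges are 2-element subsets of V,
  rV a total order on V, rE a total order on E (as relations, (a,b) \<in> r meaning a \<le> b).\<close>

definition ordered_graph :: "'v set \<Rightarrow> 'v set set \<Rightarrow> ('v \<times> 'v) set \<Rightarrow> ('v set \<times> 'v set) set \<Rightarrow> bool" where
  "ordered_graph V E rV rE \<longleftrightarrow>
     finite V \<and> (\<forall>e\<in>E. e \<subseteq> V \<and> card e = 2) \<and>
     linear_order_on V rV \<and> rV \<subseteq> V \<times> V \<and>
     linear_order_on E rE \<and> rE \<subseteq> E \<times> E"

text \<open>The j-th vertex (0-based) in the vertex order.\<close>
definition vtx :: "'v set \<Rightarrow> ('v \<times> 'v) set \<Rightarrow> nat \<Rightarrow> 'v" where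
  "vtx V rV j = (THE v. v \<in> V \<and> card {u \<in> V. (u, v) \<in> rV \<and> u \<noteq> v} = j)"

text \<open>The k-th position (0-based) in lex order on \<nat> \<times> V, rows starting at 1.\<close>
definition pos :: "'v set \<Rightarrow> ('v \<times> 'v) set \<Rightarrow> nat \<Rightarrow> nat \<times> 'v" where
  "pos V rV k = (k div card V + 1, vtx V rV (k mod card V))"

definition rE_greatest :: "('v set \<times> 'v set) set \<Rightarrow> 'v set set \<Rightarrow> 'v set" where
  "rE_greatest rE C = (THE e. e \<in> C \<and> (\<forall>e'\<in>C. (e', e) \<in> rE))"

text \<open>entered V E rV rE k: set of edges entered in the first k positions;
  entry V E rV rE k: content of the k-th position (None = blank).\<close>
fun entered :: "'v set \<Rightarrow> 'v set set \<Rightarrow> ('v \<times> 'v) set \<Rightarrow> ('v set \<times> 'v set) set \<Rightarrow> nat \<Rightarrow> 'v set set"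
  where
  "entered V E rV rE 0 = {}"
| "entered V E rV rE (Suc k) =
     (let C = {e \<in> E. snd (pos V rV k) \<in> e \<and> e \<notin> entered V E rV rE k}
      in if C = {} then entered V E rV rE k else insert (rE_greatest rE C) (entered V E rV rE k))"

definition entry :: "'v set \<Rightarrow> 'v set set \<Rightarrow> ('v \<times> 'v) set \<Rightarrow> ('v set \<times> 'v set) set \<Rightarrow> nat \<Rightarrow> 'v set option"
  where
  "entry V E rV rE k =
     (let C = {e \<in> E. snd (pos V rV k) \<in> e \<and> e \<notin> entered V E rV rE k}
      in if C = {} then None else Some (rE_greatest rE C))"

definition HT :: "'v set \<Rightarrow> 'v set set \<Rightarrow> ('v \<times> 'v) set \<Rightarrow> ('v set \<times> 'v set) set \<Rightarrow> nat \<times> 'v \<Rightarrow> 'v set option"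
  where
  "HT V E rV rE p = (if (\<exists>k. pos V rV k = p) then entry V E rV rE (THE k. pos V rV k = p) else None)"

text \<open>ht_G(e) = (h_G(e), v_G(e)): the position of e in the height table.\<close>
definition ht :: "'v set \<Rightarrow> 'v set set \<Rightarrow> ('v \<times> 'v) set \<Rightarrow> ('v set \<times> 'v set) set \<Rightarrow> 'v set \<Rightarrow> nat \<times> 'v"
  where
  "ht V E rV rE e = (THE p. fst p \<ge> 1 \<and> snd p \<in> V \<and> HT V E rV rE p = Some e)"

definition hrow :: "'v set \<Rightarrow> 'v set set \<Rightarrow> ('v \<times> 'v) set \<Rightarrow> ('v set \<times> 'v set) set \<Rightarrow> 'v set \<Rightarrow> nat"
  where "hrow V E rV rE e = fst (ht V E rV rE e)"

definition hcol :: "'v set \<Rightarrow> 'v set set \<Rightarrow> ('v \<times> 'v) set \<Rightarrow> ('v set \<times> 'v set) set \<Rightarrow> 'v set \<Rightarrow> 'v"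
  where "hcol V E rV rE e = snd (ht V E rV rE e)"

definition lex_less :: "('v \<times> 'v) set \<Rightarrow> nat \<times> 'v \<Rightarrow> nat \<times> 'v \<Rightarrow> bool" where
  "lex_less rV p q \<longleftrightarrow> fst p < fst q \<or> (fst p = fst q \<and> (snd p, snd q) \<in> rV \<and> snd p \<noteq> snd q)"

end

theory Submission
  imports Defs
begin

text \<open>The table is filled cell by cell in lexicographic order, and every edge is entered in
  exactly one cell. When the cell ht(f) is processed, e has not been entered yet, because its
  cell ht(e) comes later, and e contains the column vertex v(f). So e is one of the edges among
  which f was chosen as the largest; hence e \<le> f, and e \<noteq> f since the cells differ.\<close>

definition rank :: "'a set \<Rightarrow> ('a \<times> 'a) set \<Rightarrow> 'a \<Rightarrow> nat" where
  "rank A r x = card {y \<in> A. (y, x) \<in> r \<and> y \<noteq> x}"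

lemma rank_less_card:
  assumes "finite A" "x \<in> A"
  shows "rank A r x < card A"
proof -
  have "{y \<in> A. (y, x) \<in> r \<and> y \<noteq> x} \<subset> A" using assms(2) by auto
  then show ?thesis unfolding rank_def using assms(1) by (rule psubset_card_mono[rotated])
qed

lemma rank_strict_mono:
  assumes "finite A" "linear_order_on A r" "x \<in> A" "y \<in> A" "(x, y) \<in> r" "x \<noteq> y"
  shows "rank A r x < rank A r y"
proof -
  have "trans r" "antisym r" using assms(2) by (auto simp: order_on_defs)
  then have "{z \<in> A. (z, x) \<in> r \<and> z \<noteq> x} \<subset> {z \<in> A. (z, y) \<in> r \<and> z \<noteq> y}"
    using assms(3-6) by (auto dest: transD antisymD)
  then show ?thesis unfolding rank_def using assms(1) by (auto intro: psubset_card_mono)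
qed

lemma inj_on_rank:
  assumes "finite A" "linear_order_on A r"
  shows "inj_on (rank A r) A"
proof (rule inj_onI, rule ccontr)
  fix x y assume xy: "x \<in> A" "y \<in> A" "rank A r x = rank A r y" "x \<noteq> y"
  have "total_on A r" using assms(2) by (simp add: order_on_defs)
  with xy have "(x, y) \<in> r \<or> (y, x) \<in> r" by (auto simp: total_on_def)
  then show False
  proof
    assume "(x, y) \<in> r"
    with rank_strict_mono[OF assms xy(1,2)] xy(3,4) show False by simp
  next
    assume "(y, x) \<in> r"
    with rank_strict_mono[OF assms xy(2,1)] xy(3,4) show False by simp
  qed
qed

lemma rank_image:
  assumes "finite A" "linear_order_on A r"
  shows "rank A r ` A = {..<card A}"
proof (rule card_subset_eq)
  show "rank A r ` A \<subseteq> {..<card A}" using rank_less_card[OF assms(1)] by auto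
  show "card (rank A r ` A) = card {..<card A}" using inj_on_rank[OF assms] by (simp add: card_image)
qed simp

lemma vtx_rank:
  assumes "finite A" "linear_order_on A r" "x \<in> A"
  shows "vtx A r (rank A r x) = x"
  unfolding vtx_def rank_def[symmetric]
  by (rule the_equality) (use assms inj_on_rank in \<open>auto dest: inj_onD\<close>)

lemma
  assumes "finite A" "linear_order_on A r" "j < card A"
  shows vtx_in: "vtx A r j \<in> A" and rank_vtx: "rank A r (vtx A r j) = j"
proof -
  obtain x where "x \<in> A" "rank A r x = j"
    using rank_image[OF assms(1,2)] assms(3) by (metis imageE lessThan_iff)
  then show "vtx A r j \<in> A" "rank A r (vtx A r j) = j" using vtx_rank[OF assms(1,2)] by auto
qed

text \<open>The greatest element is the one of maximal rank.\<close>
lemma linear_order_on_greatest: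
  assumes "finite A" "linear_order_on A r" "C \<subseteq> A" "C \<noteq> {}"
  shows "\<exists>g\<in>C. \<forall>c\<in>C. (c, g) \<in> r"
proof -
  have "finite C" using assms(1,3) by (rule finite_subset[rotated])
  then obtain g where g: "g \<in> C" "rank A r g = Max (rank A r ` C)"
    using assms(4) by (metis (mono_tags, lifting) Max_in finite_imageI image_iff image_is_empty)
  have "(c, g) \<in> r" if c: "c \<in> C" for c
  proof (rule ccontr)
    assume cg: "(c, g) \<notin> r"
    have "refl_on A r" "total_on A r" using assms(2) by (simp_all add: order_on_defs)
    have "c \<in> A" "g \<in> A" using c g(1) assms(3) by auto
    have "g \<noteq> c" using cg \<open>c \<in> A\<close> \<open>refl_on A r\<close> by (auto dest: refl_onD)
    with cg have "(g, c) \<in> r"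
      using \<open>total_on A r\<close> \<open>c \<in> A\<close> \<open>g \<in> A\<close> by (auto simp: total_on_def)
    with \<open>g \<noteq> c\<close> have "rank A r g < rank A r c"
      using rank_strict_mono[OF assms(1,2)] c g(1) assms(3) by blast
    moreover have "rank A r c \<le> rank A r g" using g(2) \<open>finite C\<close> c by simp
    ultimately show False by simp
  qed
  with g(1) show ?thesis by blast
qed

lemma
  assumes "finite A" "linear_order_on A r" "C \<subseteq> A" "C \<noteq> {}"
  shows rE_greatest_in: "rE_greatest r C \<in> C"
    and rE_greatest_ge: "\<forall>c\<in>C. (c, rE_greatest r C) \<in> r"
proof -
  obtain g where g: "g \<in> C" "\<forall>c\<in>C. (c, g) \<in> r" using linear_order_on_greatest[OF assms] by blast
  have "antisym r" using assms(2) by (simp add: order_on_defs)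
  have "rE_greatest r C = g" unfolding rE_greatest_def
    by (rule the_equality) (use g \<open>antisym r\<close> in \<open>auto dest: antisymD\<close>)
  with g show "rE_greatest r C \<in> C" "\<forall>c\<in>C. (c, rE_greatest r C) \<in> r" by auto
qed

lemma inj_pos:
  assumes "finite V" "linear_order_on V rV" "V \<noteq> {}"
  shows "inj (pos V rV)"
proof (rule injI)
  fix k k' assume eq: "pos V rV k = pos V rV k'"
  have n: "card V > 0" using assms(1,3) by (simp add: card_gt_0_iff)
  from eq have "k div card V = k' div card V" by (simp add: pos_def)
  moreover from eq have "vtx V rV (k mod card V) = vtx V rV (k' mod card V)" by (simp add: pos_def)
  then have "k mod card V = k' mod card V"
    using rank_vtx[OF assms(1,2)] n by (metis mod_less_divisor)
  ultimately show "k = k'" by (metis div_mod_decomp)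
qed

lemma pos_surj:
  assumes "finite V" "linear_order_on V rV" "fst p \<ge> 1" "snd p \<in> V"
  shows "pos V rV ((fst p - 1) * card V + rank V rV (snd p)) = p"
proof -
  define q m where "q = fst p - 1" and "m = rank V rV (snd p)"
  have "m < card V" using rank_less_card[OF assms(1,4)] by (simp add: m_def)
  then have "(q * card V + m) div card V = q" "(q * card V + m) mod card V = m" by simp_all
  then show ?thesis
    using vtx_rank[OF assms(1,2,4)] assms(3) by (simp add: pos_def q_def m_def prod_eq_iff)
qed

lemma snd_pos_in:
  assumes "finite V" "linear_order_on V rV" "V \<noteq> {}"
  shows "snd (pos V rV k) \<in> V"
  using vtx_in[OF assms(1,2)] assms(1,3) by (simp add: pos_def card_gt_0_iff)

lemma lex_less_pos_imp_less:
  assumes "finite V" "linear_order_on V rV" "V \<noteq> {}"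
    and lex: "lex_less rV (pos V rV k) (pos V rV k')"
  shows "k < k'"
proof -
  define n where "n = card V"
  have n: "n > 0" using assms(1,3) by (simp add: n_def card_gt_0_iff)
  consider "k div n < k' div n"
    | "k div n = k' div n" "(vtx V rV (k mod n), vtx V rV (k' mod n)) \<in> rV"
        "vtx V rV (k mod n) \<noteq> vtx V rV (k' mod n)"
    using lex by (auto simp: lex_less_def pos_def n_def)
  then show ?thesis
  proof cases
    case 1
    then show ?thesis by (metis div_le_mono not_le)
  next
    case 2
    then have "k mod n < k' mod n"
      using rank_strict_mono[OF assms(1,2)] vtx_in[OF assms(1,2)] rank_vtx[OF assms(1,2)] n
      by (metis mod_less_divisor n_def)
    with 2(1) show ?thesis by (metis add_less_cancel_left div_mult_mod_eq)
  qed
qed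

definition candidates ::
    "'v set \<Rightarrow> 'v set set \<Rightarrow> ('v \<times> 'v) set \<Rightarrow> ('v set \<times> 'v set) set \<Rightarrow> nat \<Rightarrow> 'v set set" where
  "candidates V E rV rE k = {e \<in> E. snd (pos V rV k) \<in> e \<and> e \<notin> entered V E rV rE k}"

lemma entered_Suc_candidates:
  "entered V E rV rE (Suc k) =
     (if candidates V E rV rE k = {} then entered V E rV rE k
      else insert (rE_greatest rE (candidates V E rV rE k)) (entered V E rV rE k))"
  unfolding candidates_def by (simp only: entered.simps Let_def)

declare entered.simps(2) [simp del]

lemma entry_candidates:
  "entry V E rV rE k =
     (if candidates V E rV rE k = {} then None else Some (rE_greatest rE (candidates V E rV rE k)))"
  by (simp add: entry_def candidates_def Let_def)

lemma entry_eq_Some_iff: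
  "entry V E rV rE k = Some e \<longleftrightarrow>
     candidates V E rV rE k \<noteq> {} \<and> e = rE_greatest rE (candidates V E rV rE k)"
  by (auto simp: entry_candidates)

lemma entered_mono:
  assumes "k \<le> k'"
  shows "entered V E rV rE k \<subseteq> entered V E rV rE k'"
proof (rule lift_Suc_mono_le[OF _ assms])
  show "entered V E rV rE n \<subseteq> entered V E rV rE (Suc n)" for n
    by (simp add: entered_Suc_candidates subset_insertI)
qed

lemma entered_imp_entry:
  assumes "e \<in> entered V E rV rE k"
  shows "\<exists>j<k. entry V E rV rE j = Some e"
  using assms
proof (induction k)
  case (Suc k)
  show ?case
  proof (cases "e \<in> entered V E rV rE k")
    case True
    with Suc.IH show ?thesis using less_SucI by blast
  next
    case False
    with Suc.prems have "entry V E rV rE k = Some e"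
      by (simp add: entered_Suc_candidates entry_eq_Some_iff split: if_splits)
    then show ?thesis by blast
  qed
qed simp

context
  fixes V :: "'v set" and E rV rE
  assumes G: "ordered_graph V E rV rE"
begin

lemma finite_vertices: "finite V"
  and linear_order_vertices: "linear_order_on V rV"
  and linear_order_edges: "linear_order_on E rE"
  and edge_subset: "e \<in> E \<Longrightarrow> e \<subseteq> V"
  and card_edge: "e \<in> E \<Longrightarrow> card e = 2"
  using G by (auto simp: ordered_graph_def)

lemma finite_edges: "finite E"
proof (rule finite_subset)
  show "E \<subseteq> Pow V" using edge_subset by auto
qed (simp add: finite_vertices)

lemma vertices_nonempty:
  assumes "e \<in> E"
  shows "V \<noteq> {}"
proof -
  have "e \<noteq> {}" using card_edge[OF assms] by auto
  with edge_subset[OF assms] show ?thesis by blast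
qed

lemma
  assumes "candidates V E rV rE k \<noteq> {}"
  shows greatest_candidate_in: "rE_greatest rE (candidates V E rV rE k) \<in> candidates V E rV rE k"
    and greatest_candidate_ge:
      "\<forall>c \<in> candidates V E rV rE k. (c, rE_greatest rE (candidates V E rV rE k)) \<in> rE"
proof -
  have sub: "candidates V E rV rE k \<subseteq> E" by (auto simp: candidates_def)
  show "rE_greatest rE (candidates V E rV rE k) \<in> candidates V E rV rE k"
    by (rule rE_greatest_in[OF finite_edges linear_order_edges sub assms])
  show "\<forall>c \<in> candidates V E rV rE k. (c, rE_greatest rE (candidates V E rV rE k)) \<in> rE"
    by (rule rE_greatest_ge[OF finite_edges linear_order_edges sub assms])
qed

lemma entry_SomeD:
  assumes "entry V E rV rE k = Some e"
  shows "e \<in> candidates V E rV rE k" "\<forall>c \<in> candidates V E rV rE k. (c, e) \<in> rE"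
  using assms greatest_candidate_in greatest_candidate_ge by (auto simp: entry_eq_Some_iff)

lemma entry_in_entered_Suc:
  assumes "entry V E rV rE k = Some e"
  shows "e \<in> entered V E rV rE (Suc k)"
  using assms by (simp add: entry_eq_Some_iff entered_Suc_candidates)

lemma entered_subset_edges: "entered V E rV rE k \<subseteq> E"
proof (induction k)
  case (Suc k)
  have "rE_greatest rE (candidates V E rV rE k) \<in> E" if "candidates V E rV rE k \<noteq> {}"
    using greatest_candidate_in[OF that] by (simp add: candidates_def)
  with Suc show ?case by (simp add: entered_Suc_candidates)
qed simp

lemma entry_unique:
  assumes "entry V E rV rE k = Some e" "entry V E rV rE k' = Some e"
  shows "k = k'"
proof (rule ccontr)
  have *: False if "entry V E rV rE j = Some e" "entry V E rV rE j' = Some e" "j < j'" for j j'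
  proof -
    have "entered V E rV rE (Suc j) \<subseteq> entered V E rV rE j'"
      using that(3) by (intro entered_mono) simp
    with entry_in_entered_Suc[OF that(1)] have "e \<in> entered V E rV rE j'" by blast
    moreover have "e \<notin> entered V E rV rE j'"
      using entry_SomeD(1)[OF that(2)] by (simp add: candidates_def)
    ultimately show False by simp
  qed
  assume "k \<noteq> k'"
  then show False using *[OF assms] *[OF assms(2,1)] by (meson linorder_neqE_nat)
qed

lemma card_entered_Suc:
  assumes "candidates V E rV rE k \<noteq> {}"
  shows "card (entered V E rV rE (Suc k)) = Suc (card (entered V E rV rE k))"
proof -
  have "rE_greatest rE (candidates V E rV rE k) \<notin> entered V E rV rE k"
    using greatest_candidate_in[OF assms] by (simp add: candidates_def)
  moreover have "finite (entered V E rV rE k)"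
    using entered_subset_edges finite_edges by (rule finite_subset)
  ultimately show ?thesis using assms by (simp add: entered_Suc_candidates)
qed

text \<open>An edge that is never entered is a candidate whenever one of its vertices is visited,
  so every visit enters a new edge; as there are only finitely many edges, this is impossible.\<close>
lemma edge_has_entry:
  assumes "e \<in> E"
  shows "\<exists>k. entry V E rV rE k = Some e"
proof (rule ccontr)
  assume "\<nexists>k. entry V E rV rE k = Some e"
  then have never: "e \<notin> entered V E rV rE k" for k
    using entered_imp_entry by blast
  obtain a where a: "a \<in> e" using card_edge[OF assms] by fastforce
  have aV: "a \<in> V" using a edge_subset[OF assms] by auto
  have V: "finite V" "linear_order_on V rV" "V \<noteq> {}"
    using finite_vertices linear_order_vertices vertices_nonempty[OF assms] by auto
  define visit where "visit r = r * card V + rank V rV a" for r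
  have "snd (pos V rV (visit r)) = a" for r
    using pos_surj[OF V(1,2), of "(Suc r, a)"] aV by (simp add: visit_def)
  then have "e \<in> candidates V E rV rE (visit r)" for r
    using never assms a by (simp add: candidates_def)
  then have grow: "card (entered V E rV rE (Suc (visit r))) = Suc (card (entered V E rV rE (visit r)))"
    for r using card_entered_Suc by blast
  have visits: "r \<le> card (entered V E rV rE (visit r))" for r
  proof (induction r)
    case (Suc r)
    have "Suc (visit r) \<le> visit (Suc r)" using V by (simp add: visit_def Suc_le_eq card_gt_0_iff)
    then have "card (entered V E rV rE (Suc (visit r))) \<le> card (entered V E rV rE (visit (Suc r)))"
      using entered_mono entered_subset_edges finite_edges by (meson card_mono finite_subset)
    with Suc grow[of r] show ?case by simp
  qed simp
  moreover have "card (entered V E rV rE (visit (Suc (card E)))) \<le> card E"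
    using entered_subset_edges finite_edges by (rule card_mono[rotated])
  ultimately show False using visits[of "Suc (card E)"] by simp
qed

lemma HT_pos:
  assumes "V \<noteq> {}"
  shows "HT V E rV rE (pos V rV k) = entry V E rV rE k"
proof -
  have "(THE j. pos V rV j = pos V rV k) = k"
    using inj_pos[OF finite_vertices linear_order_vertices assms] by (auto dest: injD)
  then show ?thesis by (auto simp: HT_def)
qed

lemma ht_entry:
  assumes "entry V E rV rE k = Some e"
  shows "ht V E rV rE e = pos V rV k"
  unfolding ht_def
proof (rule the_equality)
  have V: "finite V" "linear_order_on V rV" "V \<noteq> {}"
    using finite_vertices linear_order_vertices vertices_nonempty entry_SomeD(1)[OF assms]
    by (auto simp: candidates_def)
  show "1 \<le> fst (pos V rV k) \<and> snd (pos V rV k) \<in> V \<and> HT V E rV rE (pos V rV k) = Some e"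
    using snd_pos_in[OF V] HT_pos[OF V(3)] assms by (simp add: pos_def)
  fix p assume p: "1 \<le> fst p \<and> snd p \<in> V \<and> HT V E rV rE p = Some e"
  then obtain j where j: "pos V rV j = p" using pos_surj[OF V(1,2)] by blast
  have "entry V E rV rE j = Some e" using HT_pos[OF V(3), of j] p by (simp add: j)
  with j show "p = pos V rV k" using entry_unique[OF assms] by simp
qed

end

theorem mainTheorem10:
  assumes G: "ordered_graph V E rV rE"
    and eE: "e \<in> E" and fE: "f \<in> E"
    and ve: "hcol V E rV rE f \<in> e" and vf: "hcol V E rV rE f \<in> f"
    and lt: "lex_less rV (ht V E rV rE f) (ht V E rV rE e)"
  shows "(e, f) \<in> rE \<and> e \<noteq> f"
proof -
  obtain ke kf where ke: "entry V E rV rE ke = Some e" and kf: "entry V E rV rE kf = Some f"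
    using edge_has_entry[OF G eE] edge_has_entry[OF G fE] by blast
  have ht_e: "ht V E rV rE e = pos V rV ke" and ht_f: "ht V E rV rE f = pos V rV kf"
    using ht_entry[OF G ke] ht_entry[OF G kf] .
  have "kf < ke"
    using lex_less_pos_imp_less[OF finite_vertices[OF G] linear_order_vertices[OF G]
        vertices_nonempty[OF G eE]] lt
    by (simp add: ht_e ht_f)
  then have "entered V E rV rE kf \<subseteq> entered V E rV rE ke" by (simp add: entered_mono)
  moreover have "e \<notin> entered V E rV rE ke"
    using entry_SomeD(1)[OF G ke] by (simp add: candidates_def)
  ultimately have "e \<in> candidates V E rV rE kf"
    using eE ve by (auto simp: candidates_def hcol_def ht_f)
  then have "(e, f) \<in> rE" using entry_SomeD(2)[OF G kf] by blast
  moreover have "e \<noteq> f" using entry_unique[OF G ke] kf \<open>kf < ke\<close> by auto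
  ultimately show ?thesis ..
qed

end
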